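(* Let $\boldsymbol{m}\in\mathbb{N}^2$ and $f\in\mathcal{L}(\mathrm{I}^{(\boldsymbol{m})})$, and let $P_f=\sum_{\boldsymbol{\gamma}\in\Gamma_\square}c_{\boldsymbol{\gamma}}(f)X_{\boldsymbol{\gamma}}$ be the unique function in $\Pi_\square$ with $P_f(r_{i_1},\theta_{i_2})=f(\boldsymbol{i})$ for all $\boldsymbol{i}\in\mathrm{I}^{(\boldsymbol{m})}$. Then $c_{\boldsymbol{\gamma}}(f)=\langle f,\chi_{\boldsymbol{\gamma}}\rangle_w/\|\chi_{\boldsymbol{\gamma}}\|_w^2$ for all $\boldsymbol{\gamma}\in\Gamma_\square$, and \[\frac1\pi\int_0^{2\pi}\!\!\int_0^1P_f(r,\theta)\,r\,dr\,d\theta=\sum_{k=0}^{\lfloor m_1/2\rfloor}\frac{c_{(4k,0)}(f)}{1-4k^2}.\] In particular, for every $P\in\Pi_\square$, taking $f(\boldsymbol{i})=P(r_{i_1},\theta_{i_2})$, the right-hand side equals $\frac1\pi\int_0^{2\pi}\int_0^1P(r,\theta)\,r\,dr\,d\theta$.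
   Context: $\mathrm{I}^{(\boldsymbol{m})}=\{(i_1,i_2)\in\mathbb{Z}^2:\ 0\le i_1\le m_1,\ -2m_2<i_2\le 2m_2,\ i_2\le0\text{ if }i_1=m_1,\ i_1+i_2\text{ even}\}$; $\mathcal{L}(\mathrm{I}^{(\boldsymbol{m})})$ is the space of all functions $\mathrm{I}^{(\boldsymbol{m})}\to\mathbb{C}$; $r_{i_1}=\cos\!\big(\frac{i_1\pi}{2m_1}\big)$, $\theta_{i_2}=\frac{i_2\pi}{2m_2}$. Weights $w_{\boldsymbol{i}}=\frac{1}{4m_1m_2}$ if $i_1=0$, $w_{\boldsymbol{i}}=\frac{2}{4m_1m_2}$ if $0<i_1\le m_1$; $\langle f,h\rangle_w=\sum_{\boldsymbol{i}}w_{\boldsymbol{i}}f(\boldsymbol{i})\overline{h(\boldsymbol{i})}$. $\chi_{\boldsymbol{\gamma}}(\boldsymbol{i})=\cos\!\big(\frac{\gamma_1i_1\pi}{2m_1}\big)e^{\mathrm{i}\gamma_2i_2\pi/(2m_2)}$. $X_{\boldsymbol{\gamma}}(r,\theta)=T_{\gamma_1}(r)e^{\mathrm{i}\gamma_2\theta}$ with $T_n(r)=\cos(n\arccos r)$. $\Gamma_\square=\{\boldsymbol{\gamma}\in\mathbb{Z}^2: 0\le\gamma_1\le2m_1,\ -m_2<\gamma_2\le m_2,\ \gamma_1+\gamma_2\text{ even}\}$ and $\Pi_\square=\mathrm{span}\{X_{\boldsymbol{\gamma}}:\boldsymbol{\gamma}\in\Gamma_\square\}$. *)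

theory Defs
  imports "HOL-Analysis.Analysis"
begin

definition Idx :: "nat \<Rightarrow> nat \<Rightarrow> (int \<times> int) set" where
  "Idx m1 m2 = {(i1, i2). 0 \<le> i1 \<and> i1 \<le> int m1 \<and> - 2 * int m2 < i2 \<and> i2 \<le> 2 * int m2
                  \<and> (i1 = int m1 \<longrightarrow> i2 \<le> 0) \<and> even (i1 + i2)}"

definition Gam :: "nat \<Rightarrow> nat \<Rightarrow> (int \<times> int) set" where
  "Gam m1 m2 = {(g1, g2). 0 \<le> g1 \<and> g1 \<le> 2 * int m1 \<and> - int m2 < g2 \<and> g2 \<le> int m2
                  \<and> even (g1 + g2)}"

definition rnode :: "nat \<Rightarrow> int \<Rightarrow> real" where
  "rnode m1 i1 = cos (of_int i1 * pi / (2 * real m1))"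

definition thnode :: "nat \<Rightarrow> int \<Rightarrow> real" where
  "thnode m2 i2 = of_int i2 * pi / (2 * real m2)"

definition wt :: "nat \<Rightarrow> nat \<Rightarrow> int \<times> int \<Rightarrow> real" where
  "wt m1 m2 i = (if fst i = 0 then 1 / (4 * real m1 * real m2) else 2 / (4 * real m1 * real m2))"

definition ipw :: "nat \<Rightarrow> nat \<Rightarrow> (int \<times> int \<Rightarrow> complex) \<Rightarrow> (int \<times> int \<Rightarrow> complex) \<Rightarrow> complex" where
  "ipw m1 m2 f h = (\<Sum>i\<in>Idx m1 m2. complex_of_real (wt m1 m2 i) * f i * cnj (h i))"

definition chi :: "nat \<Rightarrow> nat \<Rightarrow> int \<times> int \<Rightarrow> int \<times> int \<Rightarrow> complex" where
  "chi m1 m2 g i = complex_of_real (cos (of_int (fst g) * of_int (fst i) * pi / (2 * real m1)))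
                   * exp (\<i> * complex_of_real (of_int (snd g) * of_int (snd i) * pi / (2 * real m2)))"

definition cheb :: "int \<Rightarrow> real \<Rightarrow> real" where
  "cheb n r = cos (of_int n * arccos r)"

definition Xf :: "int \<times> int \<Rightarrow> real \<Rightarrow> real \<Rightarrow> complex" where
  "Xf g r \<theta> = complex_of_real (cheb (fst g) r) * exp (\<i> * complex_of_real (of_int (snd g) * \<theta>))"

definition Pc :: "nat \<Rightarrow> nat \<Rightarrow> (int \<times> int \<Rightarrow> complex) \<Rightarrow> real \<Rightarrow> real \<Rightarrow> complex" where
  "Pc m1 m2 c r \<theta> = (\<Sum>g\<in>Gam m1 m2. c g * Xf g r \<theta>)"

definition interp :: "nat \<Rightarrow> nat \<Rightarrow> (int \<times> int \<Rightarrow> complex) \<Rightarrow> (int \<times> int \<Rightarrow> complex) \<Rightarrow> bool" where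
  "interp m1 m2 c f = (\<forall>i\<in>Idx m1 m2. Pc m1 m2 c (rnode m1 (fst i)) (thnode m2 (snd i)) = f i)"

definition diskavg :: "(real \<Rightarrow> real \<Rightarrow> complex) \<Rightarrow> complex" where
  "diskavg P = complex_of_real (1 / pi) *
     integral {0..2*pi} (\<lambda>\<theta>. integral {0..1} (\<lambda>r. P r \<theta> * complex_of_real r))"

end

theory Submission
  imports Defs "HOL-Library.Function_Algebras"
begin

text \<open>On the grid, \<open>X\<^sub>\<gamma>\<close> takes the values \<open>\<chi>\<^sub>\<gamma>\<close>, and the \<open>\<chi>\<^sub>\<gamma>\<close> are orthogonal for
  \<open>\<langle>_, _\<rangle>\<^sub>w\<close>: the sum over \<open>i\<^sub>2\<close> is a complete sum of roots of unity unless \<open>\<gamma>\<^sub>2 = \<gamma>'\<^sub>2\<close>,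
  and for \<open>\<gamma>\<^sub>2 = \<gamma>'\<^sub>2\<close> the weights turn the sum over \<open>i\<^sub>1\<close> into a trapezoid rule that is exact
  for the cosines involved. Since there are as many frequencies as nodes, orthogonality makes the
  interpolation problem solvable, with the Fourier coefficients as its coefficients. Integrating over
  the disc kills every \<open>X\<^sub>\<gamma>\<close> with \<open>\<gamma>\<^sub>2 \<noteq> 0\<close>, and \<open>\<integral>\<^sub>0\<^sup>1 T\<^sub>2\<^sub>j(r) r dr\<close> equals
  \<open>1 / (2 (1 - j\<^sup>2))\<close> for even \<open>j\<close> and \<open>0\<close> for odd \<open>j\<close>.\<close>

definition fscale :: "complex \<Rightarrow> ('x \<Rightarrow> complex) \<Rightarrow> 'x \<Rightarrow> complex" where
  "fscale c f = (\<lambda>x. c * f x)"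

interpretation fun_vs: vector_space "fscale :: complex \<Rightarrow> ('x \<Rightarrow> complex) \<Rightarrow> _"
  by unfold_locales (auto simp: fscale_def fun_eq_iff algebra_simps)

lemma sum_fun_apply: "(\<Sum>a\<in>A. f a) x = (\<Sum>a\<in>A. f a x)"
  by (induction A rule: infinite_finite_induct) auto

lemma orthogonal_expansion_coeff:
  fixes w :: "'x \<Rightarrow> complex" and chi :: "'g \<Rightarrow> 'x \<Rightarrow> complex"
  assumes "finite G" and "g \<in> G"
    and orth: "\<And>g'. g' \<in> G \<Longrightarrow> g' \<noteq> g \<Longrightarrow> (\<Sum>i\<in>I. w i * chi g' i * cnj (chi g i)) = 0"
    and nz: "(\<Sum>i\<in>I. w i * chi g i * cnj (chi g i)) \<noteq> 0"
    and f: "\<And>i. i \<in> I \<Longrightarrow> f i = (\<Sum>g'\<in>G. c g' * chi g' i)"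
  shows "c g = (\<Sum>i\<in>I. w i * f i * cnj (chi g i)) / (\<Sum>i\<in>I. w i * chi g i * cnj (chi g i))"
proof -
  have "(\<Sum>i\<in>I. w i * f i * cnj (chi g i))
      = (\<Sum>i\<in>I. \<Sum>g'\<in>G. c g' * (w i * chi g' i * cnj (chi g i)))"
    by (intro sum.cong refl) (simp add: f sum_distrib_left sum_distrib_right mult_ac)
  also have "\<dots> = (\<Sum>g'\<in>G. c g' * (\<Sum>i\<in>I. w i * chi g' i * cnj (chi g i)))"
    by (simp add: sum.swap[of _ I] sum_distrib_left)
  also have "\<dots> = c g * (\<Sum>i\<in>I. w i * chi g i * cnj (chi g i))"
    using assms(1,2) orth by (simp add: sum.remove)
  finally show ?thesis
    using nz by simp
qed

lemma span_point_indicators: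
  assumes "finite I"
  shows "(\<lambda>x. if x \<in> I then h x else 0) \<in> fun_vs.span ((\<lambda>i x. if x = i then 1 else 0) ` I)"
proof -
  have "(\<lambda>x. if x \<in> I then h x else 0) = (\<Sum>i\<in>I. fscale (h i) (\<lambda>x. if x = i then 1 else 0))"
    using assms by (auto simp: fun_eq_iff sum_fun_apply fscale_def if_distrib cong: if_cong)
  also have "\<dots> \<in> fun_vs.span ((\<lambda>i x. if x = i then 1 else 0) ` I)"
    by (intro fun_vs.span_sum fun_vs.span_scale fun_vs.span_base) auto
  finally show ?thesis .
qed

lemma independent_orthogonal_restrictions:
  fixes w :: "'x \<Rightarrow> complex" and chi :: "'g \<Rightarrow> 'x \<Rightarrow> complex"
  assumes fG: "finite G"
    and orth: "\<And>g g'. g \<in> G \<Longrightarrow> g' \<in> G \<Longrightarrow> g' \<noteq> g \<Longrightarrow> (\<Sum>i\<in>I. w i * chi g' i * cnj (chi g i)) = 0"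
    and nz: "\<And>g. g \<in> G \<Longrightarrow> (\<Sum>i\<in>I. w i * chi g i * cnj (chi g i)) \<noteq> 0"
  shows "inj_on (\<lambda>g x. if x \<in> I then chi g x else 0) G"
    and "fun_vs.independent ((\<lambda>g x. if x \<in> I then chi g x else 0) ` G)"
proof -
  define R where "R g = (\<lambda>x. if x \<in> I then chi g x else 0)" for g
  define L where "L g h = (\<Sum>i\<in>I. w i * h i * cnj (chi g i))" for g h
  have L_orth: "L g (R g') = 0" if "g \<in> G" "g' \<in> G" "g' \<noteq> g" for g g'
    using orth[OF that] unfolding L_def R_def by (simp cong: sum.cong)
  have L_nz: "L g (R g) \<noteq> 0" if "g \<in> G" for g
    using nz[OF that] unfolding L_def R_def by (simp cong: sum.cong)
  show inj: "inj_on (\<lambda>g x. if x \<in> I then chi g x else 0) G"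
  proof (rule inj_onI, rule ccontr)
    fix g g' assume "g \<in> G" "g' \<in> G" and "g \<noteq> g'"
      and "(\<lambda>x. if x \<in> I then chi g x else 0) = (\<lambda>x. if x \<in> I then chi g' x else 0)"
    hence "L g (R g) = L g (R g')"
      by (simp add: R_def)
    thus False
      using L_nz L_orth \<open>g \<in> G\<close> \<open>g' \<in> G\<close> \<open>g \<noteq> g'\<close> by metis
  qed
  show "fun_vs.independent ((\<lambda>g x. if x \<in> I then chi g x else 0) ` G)"
    unfolding R_def[symmetric]
  proof (rule fun_vs.independent_if_scalars_zero)
    fix u v assume s: "(\<Sum>v\<in>R ` G. fscale (u v) v) = 0" and "v \<in> R ` G"
    then obtain g where g: "g \<in> G" and v: "v = R g"
      by auto
    have "0 = L g (\<Sum>v\<in>R ` G. fscale (u v) v)"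
      using s by (simp add: L_def)
    also have "\<dots> = (\<Sum>g'\<in>G. u (R g') * L g (R g'))"
      using inj unfolding L_def R_def[symmetric]
      by (simp add: sum.reindex sum_fun_apply fscale_def sum_distrib_left sum_distrib_right mult_ac sum.swap[of _ I])
    also have "\<dots> = u v * L g v"
      using fG g L_orth by (simp add: sum.remove v)
    finally show "u v = 0"
      using L_nz[OF g] v by simp
  qed (use fG in simp)
qed

text \<open>Being independent and \<open>card I\<close> in number, the restrictions of the \<open>chi g\<close> to \<open>I\<close> span the
  \<open>card I\<close>-dimensional space of functions on \<open>I\<close>.\<close>
lemma orthogonal_family_interpolates:
  fixes w :: "'x \<Rightarrow> complex" and chi :: "'g \<Rightarrow> 'x \<Rightarrow> complex"
  assumes fI: "finite I" and fG: "finite G" and card_eq: "card G = card I"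
    and orth: "\<And>g g'. g \<in> G \<Longrightarrow> g' \<in> G \<Longrightarrow> g' \<noteq> g \<Longrightarrow> (\<Sum>i\<in>I. w i * chi g' i * cnj (chi g i)) = 0"
    and nz: "\<And>g. g \<in> G \<Longrightarrow> (\<Sum>i\<in>I. w i * chi g i * cnj (chi g i)) \<noteq> 0"
  shows "\<exists>c. \<forall>i\<in>I. f i = (\<Sum>g\<in>G. c g * chi g i)"
proof -
  define R where "R h = (\<lambda>x. if x \<in> I then h x else 0)" for h :: "'x \<Rightarrow> complex"
  define B where "B = (\<lambda>g. R (chi g)) ` G"
  define D where "D = (\<lambda>i x. if x = i then 1 else 0 :: complex) ` I"
  have inj: "inj_on (\<lambda>g. R (chi g)) G" and indep: "fun_vs.independent B"
    using independent_orthogonal_restrictions[OF fG orth nz] by (simp_all add: R_def B_def)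
  have fB: "finite B" and card_B: "card B = card I"
    using fG inj card_eq by (simp_all add: B_def card_image)
  have "R f \<in> fun_vs.span B"
  proof (rule ccontr)
    assume R_f: "R f \<notin> fun_vs.span B"
    have "insert (R f) B \<subseteq> fun_vs.span D"
      using span_point_indicators[OF fI] by (auto simp: R_def B_def D_def)
    hence "card (insert (R f) B) \<le> card D"
      using fun_vs.independent_span_bound[OF _ fun_vs.independent_insertI[OF R_f indep]] fI
      by (simp add: D_def)
    moreover have "card D \<le> card I"
      unfolding D_def by (rule card_image_le[OF fI])
    ultimately show False
      using R_f fun_vs.span_base[of "R f" B] fB card_B by (auto simp: card_insert_if split: if_splits)
  qed
  then obtain u where u: "R f = (\<Sum>v\<in>B. fscale (u v) v)"
    using fun_vs.span_finite[OF fB] by auto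
  show ?thesis
  proof (intro exI ballI)
    fix i assume i: "i \<in> I"
    have "f i = (\<Sum>v\<in>B. u v * v i)"
      using i arg_cong[OF u, of "\<lambda>h. h i"] by (simp add: R_def sum_fun_apply fscale_def)
    also have "\<dots> = (\<Sum>g\<in>G. u (R (chi g)) * chi g i)"
      using i inj by (simp add: B_def sum.reindex R_def)
    finally show "f i = (\<Sum>g\<in>G. u (R (chi g)) * chi g i)" .
  qed
qed

definition parity_window :: "int \<Rightarrow> nat \<Rightarrow> int \<Rightarrow> int set" where
  "parity_window lo n p = {x. lo < x \<and> x \<le> lo + 2 * int n \<and> even (x + p)}"

lemma parity_window_eq_image: "\<exists>b. parity_window lo n p = (\<lambda>t. 2 * int t + b) ` {..<n}"
proof
  define b where "b = (if even (lo + 1 + p) then lo + 1 else lo + 2)"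
  show "parity_window lo n p = (\<lambda>t. 2 * int t + b) ` {..<n}"
  proof (intro set_eqI iffI)
    fix x assume "x \<in> parity_window lo n p"
    hence "lo < x" "x \<le> lo + 2 * int n" "even (x + p)"
      by (simp_all add: parity_window_def)
    hence "even (x - b)" "b \<le> x" "x < b + 2 * int n"
      unfolding b_def by presburger+
    thus "x \<in> (\<lambda>t. 2 * int t + b) ` {..<n}"
      by (intro image_eqI[of _ _ "nat ((x - b) div 2)"]) auto
  qed (auto simp: parity_window_def b_def split: if_splits)
qed

lemma inj_on_affine_int: "inj_on (\<lambda>t. 2 * int t + b) A"
  by (rule inj_onI) simp

lemma finite_parity_window: "finite (parity_window lo n p)"
  using parity_window_eq_image by (metis finite_imageI finite_lessThan)

lemma card_parity_window: "card (parity_window lo n p) = n"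
  using parity_window_eq_image by (metis card_image card_lessThan inj_on_affine_int)

lemma sin_pi_ratio_ne_0:
  fixes k :: int and N :: nat
  assumes "k \<noteq> 0" and "\<bar>k\<bar> < int N"
  shows "sin (of_int k * pi / real N) \<noteq> 0"
proof
  assume "sin (of_int k * pi / real N) = 0"
  then obtain i :: int where "of_int k * pi / real N = of_int i * pi"
    by (auto simp: sin_zero_iff_int2)
  hence "real_of_int k = real_of_int (i * int N)"
    using assms by (simp add: field_simps)
  hence k: "k = i * int N"
    by (simp only: of_int_eq_iff)
  hence "i \<noteq> 0"
    using assms(1) by auto
  hence "1 * int N \<le> \<bar>i\<bar> * int N"
    by (intro mult_right_mono) auto
  thus False
    using assms(2) k by (simp add: abs_mult)
qed

text \<open>A geometric sum of \<open>n\<close> powers of \<open>z = cis (\<delta> \<pi> / M) \<noteq> 1\<close>, where \<open>z ^ n = 1\<close>.\<close>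
lemma sum_cis_parity_window_eq_0:
  fixes \<delta> :: int
  assumes "\<delta> \<noteq> 0" and "\<bar>\<delta>\<bar> < 2 * int M" and "n = 2 * M \<or> n = M \<and> even \<delta>"
  shows "(\<Sum>x\<in>parity_window lo n p. cis (of_int \<delta> * of_int x * pi / (2 * real M))) = 0"
proof -
  obtain b where b: "parity_window lo n p = (\<lambda>t. 2 * int t + b) ` {..<n}"
    using parity_window_eq_image by blast
  define x where "x = of_int \<delta> * pi / (2 * real M)"
  define z where "z = cis (2 * x)"
  have M: "M > 0"
    using assms(1,2) by simp
  have "sin x \<noteq> 0"
    using sin_pi_ratio_ne_0[of \<delta> "2 * M"] assms(1,2) by (simp add: x_def)
  hence "z \<noteq> 1"
    by (auto simp: z_def complex_eq_iff cos_double_sin)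
  moreover have "z ^ n = 1"
  proof -
    have "real n * of_int \<delta> / (2 * real M) \<in> \<int>"
      using assms(3) M by (auto simp: field_simps)
    hence "cis (2 * pi * (real n * of_int \<delta> / (2 * real M))) = 1"
      by (rule cis_multiple_2pi)
    thus ?thesis
      by (simp add: z_def Complex.DeMoivre x_def field_simps)
  qed
  ultimately have "(\<Sum>t<n. z ^ t) = 0"
    by (simp add: sum_gp_strict)
  moreover have "cis (of_int \<delta> * of_int (2 * int t + b) * pi / (2 * real M)) = cis (of_int b * x) * z ^ t" for t
  proof -
    have "of_int \<delta> * of_int (2 * int t + b) * pi / (2 * real M) = of_int b * x + real t * (2 * x)"
      using M by (simp add: x_def field_simps)
    thus ?thesis
      by (simp add: z_def Complex.DeMoivre cis_mult)
  qed
  ultimately show ?thesis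
    by (simp add: b sum.reindex[OF inj_on_affine_int] flip: sum_distrib_left)
qed

lemma sum_cos_Dirichlet:
  "2 * sin (y / 2) * (\<Sum>j\<le>N. cos (real j * y)) = sin (y / 2) + sin ((real N + 1 / 2) * y)"
proof (induction N)
  case (Suc N)
  have "y / 2 + real (Suc N) * y = (real (Suc N) + 1 / 2) * y"
    and "y / 2 - real (Suc N) * y = - ((real N + 1 / 2) * y)"
    by (simp_all add: algebra_simps)
  hence "2 * sin (y / 2) * cos (real (Suc N) * y)
      = sin ((real (Suc N) + 1 / 2) * y) - sin ((real N + 1 / 2) * y)"
    using sin_times_cos[of "y / 2" "real (Suc N) * y"] by simp
  with Suc show ?case
    by (simp add: distrib_left)
qed simp

definition trapezoid_weight :: "nat \<Rightarrow> int \<Rightarrow> real" where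
  "trapezoid_weight M i = (if i = 0 \<or> i = int M then 1 / (2 * real M) else 1 / real M)"

text \<open>The trapezoid rule with \<open>M\<close> panels integrates \<open>cos (n t)\<close>, \<open>0 < \<bar>n\<bar> < 4 M\<close> even, exactly over a
  half period.\<close>
lemma trapezoid_sum_cos_eq_0:
  fixes n :: int
  assumes "even n" and "n \<noteq> 0" and "\<bar>n\<bar> < 4 * int M"
  shows "(\<Sum>i=0..int M. trapezoid_weight M i * cos (of_int n * of_int i * pi / (2 * real M))) = 0"
proof -
  define y where "y = of_int n * pi / (2 * real M)"
  have M: "M > 0"
    using assms(2,3) by simp
  have sin_ne_0: "sin (y / 2) \<noteq> 0"
    using sin_pi_ratio_ne_0[of n "4 * M"] assms(2,3) by (simp add: y_def)
  have "sin ((real M + 1 / 2) * y) = cos (real M * y) * sin (y / 2)"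
  proof -
    obtain k where "n = 2 * k"
      using assms(1) by blast
    hence "real M * y = pi * of_int k"
      using M by (simp add: y_def field_simps)
    thus ?thesis
      by (simp add: distrib_right sin_add)
  qed
  hence "sin (y / 2) * (2 * (\<Sum>j\<le>M. cos (real j * y)) - (1 + cos (real M * y))) = 0"
    using sum_cos_Dirichlet[of y M] by (simp add: algebra_simps)
  hence cos_sum: "(\<Sum>j\<le>M. cos (real j * y)) = (1 + cos (real M * y)) / 2"
    using sin_ne_0 by simp
  have "{0..int M} = int ` {..M}"
    by (simp add: image_int_atLeastAtMost atMost_atLeast0)
  hence "(\<Sum>i=0..int M. trapezoid_weight M i * cos (of_int n * of_int i * pi / (2 * real M)))
      = (\<Sum>j\<le>M. trapezoid_weight M (int j) * cos (real j * y))"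
    by (simp add: sum.reindex y_def mult_ac)
  also have "\<dots> = (\<Sum>j\<le>M. cos (real j * y) / real M - (if j = 0 then 1 / (2 * real M) else 0)
                     - (if j = M then cos (real M * y) / (2 * real M) else 0))"
    using M by (intro sum.cong) (auto simp: trapezoid_weight_def field_simps)
  also have "\<dots> = (\<Sum>j\<le>M. cos (real j * y)) / real M - (1 + cos (real M * y)) / (2 * real M)"
    by (simp add: sum_subtractf sum_divide_distrib add_divide_distrib)
  finally show ?thesis
    by (simp add: cos_sum)
qed

definition Idx_row :: "nat \<Rightarrow> nat \<Rightarrow> int \<Rightarrow> int set" where
  "Idx_row m1 m2 i1 = parity_window (- 2 * int m2) (if i1 = int m1 then m2 else 2 * m2) i1"

lemma Idx_eq_Sigma: "Idx m1 m2 = Sigma {0..int m1} (Idx_row m1 m2)"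
  by (auto simp: Idx_def Idx_row_def parity_window_def split: if_splits)

lemma Gam_eq_Sigma: "Gam m1 m2 = Sigma {0..2 * int m1} (parity_window (- int m2) m2)"
  by (auto simp: Gam_def parity_window_def add.commute)

lemma finite_Idx_row: "finite (Idx_row m1 m2 i1)"
  by (simp add: Idx_row_def finite_parity_window)

lemma finite_Idx: "finite (Idx m1 m2)"
  by (simp add: Idx_eq_Sigma finite_Idx_row)

lemma finite_Gam: "finite (Gam m1 m2)"
  by (simp add: Gam_eq_Sigma finite_parity_window)

lemma card_Gam_eq_card_Idx: "card (Gam m1 m2) = card (Idx m1 m2)"
proof -
  have "card (Idx m1 m2) = (\<Sum>i1=0..int m1. if i1 = int m1 then m2 else 2 * m2)"
    by (simp add: Idx_eq_Sigma card_SigmaI finite_parity_window Idx_row_def card_parity_window)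
  also have "\<dots> = m2 + 2 * m1 * m2"
  proof -
    have "{0..int m1} = insert (int m1) {0..<int m1}"
      by auto
    thus ?thesis
      by simp
  qed
  finally have "card (Idx m1 m2) = m2 + 2 * m1 * m2" .
  moreover have "card (Gam m1 m2) = (2 * m1 + 1) * m2"
    using nat_int_add[of "2 * m1" 1]
    by (simp add: Gam_eq_Sigma card_SigmaI finite_parity_window card_parity_window)
  ultimately show ?thesis
    by simp
qed

lemma wt_times_card_Idx_row:
  assumes "m1 \<ge> 1" and "m2 \<ge> 1" and "i1 \<in> {0..int m1}"
  shows "wt m1 m2 (i1, i2) * real (card (Idx_row m1 m2 i1)) = trapezoid_weight m1 i1"
  using assms by (auto simp: wt_def Idx_row_def card_parity_window trapezoid_weight_def)

lemma trapezoid_sum_cos_mult_cos_eq_0: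
  fixes a b :: int
  assumes "0 \<le> a" "a \<le> 2 * int M" "0 \<le> b" "b \<le> 2 * int M" "a \<noteq> b" "even (a + b)"
  shows "(\<Sum>i=0..int M. trapezoid_weight M i
           * (cos (of_int b * of_int i * pi / (2 * real M)) * cos (of_int a * of_int i * pi / (2 * real M)))) = 0"
proof -
  have "(\<Sum>i=0..int M. trapezoid_weight M i
           * (cos (of_int b * of_int i * pi / (2 * real M)) * cos (of_int a * of_int i * pi / (2 * real M))))
      = (\<Sum>i=0..int M. trapezoid_weight M i * cos (of_int (b - a) * of_int i * pi / (2 * real M))) / 2
        + (\<Sum>i=0..int M. trapezoid_weight M i * cos (of_int (b + a) * of_int i * pi / (2 * real M))) / 2"
    by (simp add: cos_times_cos sum_divide_distrib flip: sum.distrib) (simp add: algebra_simps add_divide_distrib diff_divide_distrib)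
  also have "\<dots> = 0"
    using trapezoid_sum_cos_eq_0[of "b - a" M] trapezoid_sum_cos_eq_0[of "b + a" M] assms by fastforce
  finally show ?thesis .
qed

lemma chi_mult_cnj_chi:
  "chi m1 m2 (b, e') i * cnj (chi m1 m2 (a, e) i) =
     complex_of_real (cos (of_int b * of_int (fst i) * pi / (2 * real m1))
                      * cos (of_int a * of_int (fst i) * pi / (2 * real m1)))
     * cis (of_int (e' - e) * of_int (snd i) * pi / (2 * real m2))"
  unfolding chi_def cis_conv_exp[symmetric]
  by (simp add: cis_cnj cis_mult left_diff_distrib diff_divide_distrib)

lemma ipw_chi_eq_sum_rows:
  "ipw m1 m2 (chi m1 m2 (b, e')) (chi m1 m2 (a, e))
     = (\<Sum>i1=0..int m1. complex_of_real (wt m1 m2 (i1, 0)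
                            * cos (of_int b * of_int i1 * pi / (2 * real m1))
                            * cos (of_int a * of_int i1 * pi / (2 * real m1)))
          * (\<Sum>i2\<in>Idx_row m1 m2 i1. cis (of_int (e' - e) * of_int i2 * pi / (2 * real m2))))"
proof -
  have "complex_of_real (wt m1 m2 i) * chi m1 m2 (b, e') i * cnj (chi m1 m2 (a, e) i)
      = complex_of_real (wt m1 m2 (fst i, 0) * cos (of_int b * of_int (fst i) * pi / (2 * real m1))
                         * cos (of_int a * of_int (fst i) * pi / (2 * real m1)))
        * cis (of_int (e' - e) * of_int (snd i) * pi / (2 * real m2))" for i
    by (simp add: mult.assoc chi_mult_cnj_chi wt_def)
  thus ?thesis
    by (simp add: ipw_def Idx_eq_Sigma sum.Sigma finite_Idx_row split_def sum_distrib_left)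
qed

text \<open>The row sums over \<open>i\<^sub>2\<close> are complete sums of roots of unity, except for the short row
  \<open>i\<^sub>1 = m\<^sub>1\<close> when \<open>e' - e\<close> is odd; but then \<open>a\<close> or \<open>b\<close> is odd, so a radial factor vanishes.\<close>
lemma row_sum_orthogonal:
  assumes m1: "m1 \<ge> 1" and "(a, e) \<in> Gam m1 m2" "(b, e') \<in> Gam m1 m2" and "e' \<noteq> e"
  shows "complex_of_real (cos (of_int b * of_int i1 * pi / (2 * real m1))
                           * cos (of_int a * of_int i1 * pi / (2 * real m1)))
           * (\<Sum>i2\<in>Idx_row m1 m2 i1. cis (of_int (e' - e) * of_int i2 * pi / (2 * real m2))) = 0"
proof -
  have a: "- int m2 < e" "e \<le> int m2" "even (a + e)" and b: "- int m2 < e'" "e' \<le> int m2" "even (b + e')"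
    using assms(2,3) by (auto simp: Gam_def)
  show ?thesis
  proof (cases "i1 = int m1 \<and> odd (e' - e)")
    case True
    hence "odd c \<Longrightarrow> cos (of_int c * of_int i1 * pi / (2 * real m1)) = 0" for c
      using m1 by (auto simp: cos_zero_iff_int)
    moreover have "odd a \<or> odd b"
      using True a(3) b(3) by presburger
    ultimately show ?thesis
      by auto
  next
    case False
    have "(\<Sum>i2\<in>Idx_row m1 m2 i1. cis (of_int (e' - e) * of_int i2 * pi / (2 * real m2))) = 0"
      unfolding Idx_row_def using False assms(4) a b
      by (intro sum_cis_parity_window_eq_0) auto
    thus ?thesis
      by simp
  qed
qed

lemma ipw_chi_orthogonal:
  assumes m1: "m1 \<ge> 1" and m2: "m2 \<ge> 1" and "g \<in> Gam m1 m2" "g' \<in> Gam m1 m2" "g' \<noteq> g"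
  shows "ipw m1 m2 (chi m1 m2 g') (chi m1 m2 g) = 0"
proof -
  obtain a e b e' where g: "g = (a, e)" and g': "g' = (b, e')"
    by (cases g, cases g')
  have a: "0 \<le> a" "a \<le> 2 * int m1" "- int m2 < e" "e \<le> int m2" "even (a + e)"
    and b: "0 \<le> b" "b \<le> 2 * int m1" "- int m2 < e'" "e' \<le> int m2" "even (b + e')"
    using assms(3,4) by (auto simp: Gam_def g g')
  define C where "C c i1 = cos (of_int c * of_int i1 * pi / (2 * real m1))" for c i1 :: int
  define S where "S i1 = (\<Sum>i2\<in>Idx_row m1 m2 i1. cis (of_int (e' - e) * of_int i2 * pi / (2 * real m2)))"
    for i1
  have "ipw m1 m2 (chi m1 m2 g') (chi m1 m2 g)
      = (\<Sum>i1=0..int m1. complex_of_real (wt m1 m2 (i1, 0) * C b i1 * C a i1) * S i1)"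
    unfolding g g' C_def S_def by (rule ipw_chi_eq_sum_rows)
  also have "\<dots> = 0"
  proof (cases "e' = e")
    case True
    have "complex_of_real (wt m1 m2 (i1, 0) * C b i1 * C a i1) * S i1
        = complex_of_real (trapezoid_weight m1 i1 * (C b i1 * C a i1))" if "i1 \<in> {0..int m1}" for i1
    proof -
      have "S i1 = of_real (real (card (Idx_row m1 m2 i1)))"
        by (simp add: S_def True)
      thus ?thesis
        by (simp flip: wt_times_card_Idx_row[OF m1 m2 that, of 0] add: mult_ac)
    qed
    hence "(\<Sum>i1=0..int m1. complex_of_real (wt m1 m2 (i1, 0) * C b i1 * C a i1) * S i1)
        = complex_of_real (\<Sum>i1=0..int m1. trapezoid_weight m1 i1 * (C b i1 * C a i1))"
      unfolding of_real_sum by (rule sum.cong[OF refl])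
    also have "\<dots> = 0"
      using trapezoid_sum_cos_mult_cos_eq_0[of a m1 b] a b True assms(5) by (simp add: C_def g g')
    finally show ?thesis .
  next
    case False
    have "C b i1 * C a i1 * S i1 = 0" if "i1 \<in> {0..int m1}" for i1
      using row_sum_orthogonal[OF m1 assms(3,4)[unfolded g g'] False] by (simp add: C_def S_def)
    thus ?thesis
      by (intro sum.neutral) (simp add: mult.assoc)
  qed
  finally show ?thesis .
qed

lemma ipw_chi_self_ne_0:
  assumes "m1 \<ge> 1" and "m2 \<ge> 1"
  shows "ipw m1 m2 (chi m1 m2 g) (chi m1 m2 g) \<noteq> 0"
proof -
  have ipw_eq: "ipw m1 m2 (chi m1 m2 g) (chi m1 m2 g)
      = complex_of_real (\<Sum>i\<in>Idx m1 m2. wt m1 m2 i * (cmod (chi m1 m2 g i))\<^sup>2)"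
    unfolding ipw_def of_real_sum by (intro sum.cong refl) (simp only: of_real_mult complex_norm_square mult.assoc)
  have "(0, 0) \<in> Idx m1 m2"
    using assms by (auto simp: Idx_def)
  hence "wt m1 m2 (0, 0) * (cmod (chi m1 m2 g (0, 0)))\<^sup>2 \<le> (\<Sum>i\<in>Idx m1 m2. wt m1 m2 i * (cmod (chi m1 m2 g i))\<^sup>2)"
    by (intro member_le_sum finite_Idx) (auto simp: wt_def)
  moreover have "wt m1 m2 (0, 0) * (cmod (chi m1 m2 g (0, 0)))\<^sup>2 > 0"
    using assms by (simp add: wt_def chi_def)
  ultimately have "(\<Sum>i\<in>Idx m1 m2. wt m1 m2 i * (cmod (chi m1 m2 g i))\<^sup>2) \<noteq> 0"
    by linarith
  thus ?thesis
    unfolding ipw_eq of_real_eq_0_iff .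
qed

lemma Xf_at_node:
  assumes "m1 \<ge> 1" and "i \<in> Idx m1 m2"
  shows "Xf g (rnode m1 (fst i)) (thnode m2 (snd i)) = chi m1 m2 g i"
proof -
  have "0 \<le> of_int (fst i) * pi / (2 * real m1)" "of_int (fst i) * pi / (2 * real m1) \<le> pi"
    using assms by (auto simp: Idx_def field_simps)
  hence "arccos (rnode m1 (fst i)) = of_int (fst i) * pi / (2 * real m1)"
    unfolding rnode_def by (rule arccos_cos)
  thus ?thesis
    by (simp add: Xf_def cheb_def chi_def thnode_def mult.assoc)
qed

lemma interp_iff_chi_expansion:
  assumes "m1 \<ge> 1"
  shows "interp m1 m2 c f \<longleftrightarrow> (\<forall>i\<in>Idx m1 m2. f i = (\<Sum>g\<in>Gam m1 m2. c g * chi m1 m2 g i))"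
  using assms by (auto simp: interp_def Pc_def Xf_at_node)

lemma interp_exists:
  assumes "m1 \<ge> 1" and "m2 \<ge> 1"
  shows "\<exists>c. interp m1 m2 c f"
  using orthogonal_family_interpolates[OF finite_Idx finite_Gam card_Gam_eq_card_Idx,
      where w = "\<lambda>i. complex_of_real (wt m1 m2 i)" and chi = "chi m1 m2" and f = f]
    ipw_chi_orthogonal[OF assms] ipw_chi_self_ne_0[OF assms]
  by (simp add: interp_iff_chi_expansion[OF assms(1)] ipw_def)

lemma interp_coeff:
  assumes "m1 \<ge> 1" and "m2 \<ge> 1" and "interp m1 m2 c f" and "g \<in> Gam m1 m2"
  shows "c g = ipw m1 m2 f (chi m1 m2 g) / ipw m1 m2 (chi m1 m2 g) (chi m1 m2 g)"
  using orthogonal_expansion_coeff[OF finite_Gam assms(4),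
      where I = "Idx m1 m2" and w = "\<lambda>i. complex_of_real (wt m1 m2 i)" and chi = "chi m1 m2"]
    ipw_chi_orthogonal[OF assms(1,2,4)] ipw_chi_self_ne_0[OF assms(1,2)] assms(3)
  by (simp add: interp_iff_chi_expansion[OF assms(1)] ipw_def)

lemma has_integral_exp_int_2pi:
  fixes n :: int
  shows "((\<lambda>\<theta>. exp (\<i> * complex_of_real (of_int n * \<theta>))) has_integral
           (if n = 0 then complex_of_real (2 * pi) else 0)) {0..2 * pi}"
proof (cases "n = 0")
  case True
  thus ?thesis
    using has_integral_const_real[of "1 :: complex" 0 "2 * pi"] by (simp add: scaleR_conv_of_real)
next
  case False
  define F where "F z = exp (\<i> * of_int n * z) / (\<i> * of_int n)" for z :: complex
  have "(F has_field_derivative exp (\<i> * complex_of_real (of_int n * \<theta>))) (at (of_real \<theta>))" for \<theta>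
    unfolding F_def using False by (auto intro!: derivative_eq_intros simp: mult.assoc)
  hence "((\<lambda>\<theta>. F (of_real \<theta>)) has_vector_derivative exp (\<i> * complex_of_real (of_int n * \<theta>)))
           (at \<theta> within {0..2 * pi})" for \<theta>
    by (rule has_vector_derivative_real_field)
  hence "((\<lambda>\<theta>. exp (\<i> * complex_of_real (of_int n * \<theta>))) has_integral F (of_real (2 * pi)) - F (of_real 0)) {0..2 * pi}"
    by (intro fundamental_theorem_of_calculus) auto
  moreover have "F (of_real (2 * pi)) = F (of_real 0)"
    using cis_multiple_2pi[of "of_int n"] by (simp add: F_def cis_conv_exp mult_ac)
  ultimately show ?thesis
    using False by simp
qed

lemma has_real_derivative_cos_arccos_div:
  fixes a r :: real
  assumes "- 1 < r" and "r < 1"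
  shows "((\<lambda>r. cos (2 * a * arccos r) / a) has_real_derivative 2 * sin (2 * a * arccos r) / sqrt (1 - r\<^sup>2)) (at r)"
proof (cases "a = 0")
  case False
  have "((\<lambda>r. cos (2 * a * arccos r) / a) has_real_derivative
          - sin (2 * a * arccos r) * (2 * a * inverse (- sqrt (1 - r\<^sup>2))) / a) (at r)"
    using assms by (auto intro!: derivative_eq_intros)
  thus ?thesis
    using False by (simp add: field_simps)
qed simp

text \<open>Substituting \<open>r = cos t\<close>, the integrand \<open>T\<^sub>2\<^sub>j(r) r dr\<close> becomes \<open>- cos (2 j t) cos t sin t dt\<close>,
  a combination of \<open>sin (2 (1 \<plusminus> j) t)\<close>. When \<open>j = \<plusminus>1\<close> one of the two terms is divided by zero;
  it is then the constant \<open>0\<close>, which is still correct.\<close>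
definition cheb_even_r_primitive :: "int \<Rightarrow> real \<Rightarrow> real" where
  "cheb_even_r_primitive j r =
     (cos (2 * (1 + of_int j) * arccos r) / (1 + of_int j)
      + cos (2 * (1 - of_int j) * arccos r) / (1 - of_int j)) / 8"

lemma has_real_derivative_cheb_even_r_primitive:
  assumes "- 1 < r" and "r < 1"
  shows "(cheb_even_r_primitive j has_real_derivative cheb (2 * j) r * r) (at r)"
proof -
  define a b where "a = 1 + real_of_int j" and "b = 1 - real_of_int j"
  define t where "t = arccos r"
  have sin_t: "sin t = sqrt (1 - r\<^sup>2)" and "sin t > 0" and cos_t: "cos t = r"
    using assms by (simp_all add: t_def sin_arccos sin_arccos_nonzero abs_square_less_1)
  have "sin (2 * a * t) + sin (2 * b * t) = 2 * sin (2 * t) * cos (2 * real_of_int j * t)"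
    by (simp add: sin_plus_sin a_def b_def algebra_simps)
  hence "sin (2 * a * t) + sin (2 * b * t) = 4 * sin t * cos t * cos (2 * real_of_int j * t)"
    by (simp only: sin_double)
  hence "(2 * sin (2 * a * t) / sqrt (1 - r\<^sup>2) + 2 * sin (2 * b * t) / sqrt (1 - r\<^sup>2)) / 8
      = cheb (2 * j) r * r"
    using \<open>sin t > 0\<close> unfolding cheb_def t_def[symmetric] sin_t[symmetric]
    by (simp add: cos_t field_simps)
  moreover have "(cheb_even_r_primitive j has_real_derivative
      (2 * sin (2 * a * t) / sqrt (1 - r\<^sup>2) + 2 * sin (2 * b * t) / sqrt (1 - r\<^sup>2)) / 8) (at r)"
    unfolding cheb_even_r_primitive_def[abs_def] a_def b_def t_def using assms
    by (intro DERIV_cdivide DERIV_add has_real_derivative_cos_arccos_div)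
  ultimately show ?thesis
    by simp
qed

lemma cheb_even_r_primitive_1_minus_0:
  "cheb_even_r_primitive j 1 - cheb_even_r_primitive j 0 = (if even j then 1 / (2 * (1 - (of_int j)\<^sup>2)) else 0)"
proof -
  define a b where "a = 1 + real_of_int j" and "b = 1 - real_of_int j"
  have "cos (2 * a * arccos 0) = (if even j then -1 else 1)"
    using cos_npi_int[of "1 + j"] by (simp add: a_def algebra_simps)
  moreover have "cos (2 * b * arccos 0) = (if even j then -1 else 1)"
    using cos_npi_int[of "1 - j"] by (simp add: b_def algebra_simps)
  ultimately have "cheb_even_r_primitive j 1 - cheb_even_r_primitive j 0 = (if even j then (1 / a + 1 / b) / 4 else 0)"
    by (simp add: cheb_even_r_primitive_def a_def b_def field_simps)
  moreover have "(1 / a + 1 / b) / 4 = 1 / (2 * (1 - (of_int j)\<^sup>2))" if "even j"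
  proof -
    have "1 + j \<noteq> 0" "1 - j \<noteq> 0"
      using that by presburger+
    hence "a \<noteq> 0" "b \<noteq> 0"
      unfolding a_def b_def by linarith+
    moreover have "1 - (of_int j)\<^sup>2 = a * b" and "a + b = 2"
      by (simp_all add: a_def b_def algebra_simps power2_eq_square)
    ultimately show ?thesis
      by (simp add: field_simps)
  qed
  ultimately show ?thesis
    by metis
qed

lemma has_integral_cheb_even_times_r:
  "((\<lambda>r. cheb (2 * j) r * r) has_integral (if even j then 1 / (2 * (1 - (of_int j)\<^sup>2)) else 0)) {0..1}"
proof -
  have "continuous_on {0..1} (cheb_even_r_primitive j)"
    unfolding cheb_even_r_primitive_def[abs_def] divide_inverse by (intro continuous_intros) auto
  hence "((\<lambda>r. cheb (2 * j) r * r) has_integral cheb_even_r_primitive j 1 - cheb_even_r_primitive j 0) {0..1}"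
    using has_real_derivative_cheb_even_r_primitive
    by (intro fundamental_theorem_of_calculus_interior)
      (auto simp: has_real_derivative_iff_has_vector_derivative[symmetric])
  thus ?thesis
    by (simp only: cheb_even_r_primitive_1_minus_0)
qed

lemma integrable_cheb_times_r: "(\<lambda>r. cheb n r * r) integrable_on {0..1}"
  unfolding cheb_def by (intro integrable_continuous_interval continuous_intros) auto

lemma diskavg_sum_Xf:
  assumes "finite G"
  shows "diskavg (\<lambda>r \<theta>. \<Sum>g\<in>G. c g * Xf g r \<theta>)
       = (\<Sum>g\<in>G. if snd g = 0 then 2 * c g * complex_of_real (integral {0..1} (\<lambda>r. cheb (fst g) r * r)) else 0)"
proof -
  define R where "R n = integral {0..1} (\<lambda>r. cheb n r * r)" for n
  define E where "E g \<theta> = exp (\<i> * complex_of_real (of_int (snd g) * \<theta>))" for g :: "int \<times> int" and \<theta>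
  have inner: "integral {0..1} (\<lambda>r. (\<Sum>g\<in>G. c g * Xf g r \<theta>) * complex_of_real r)
      = (\<Sum>g\<in>G. c g * complex_of_real (R (fst g)) * E g \<theta>)" for \<theta>
  proof (rule integral_unique)
    have "((\<lambda>r. \<Sum>g\<in>G. c g * E g \<theta> * complex_of_real (cheb (fst g) r * r)) has_integral
            (\<Sum>g\<in>G. c g * E g \<theta> * complex_of_real (R (fst g)))) {0..1}"
      unfolding R_def using assms integrable_cheb_times_r
      by (intro has_integral_sum has_integral_mult_right has_integral_of_real integrable_integral)
    moreover have "(\<lambda>r. (\<Sum>g\<in>G. c g * Xf g r \<theta>) * complex_of_real r)
        = (\<lambda>r. \<Sum>g\<in>G. c g * E g \<theta> * complex_of_real (cheb (fst g) r * r))"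
      by (simp add: Xf_def E_def sum_distrib_left sum_distrib_right mult_ac fun_eq_iff)
    ultimately show "((\<lambda>r. (\<Sum>g\<in>G. c g * Xf g r \<theta>) * complex_of_real r) has_integral
        (\<Sum>g\<in>G. c g * complex_of_real (R (fst g)) * E g \<theta>)) {0..1}"
      by (simp add: mult_ac)
  qed
  have outer: "((\<lambda>\<theta>. \<Sum>g\<in>G. c g * complex_of_real (R (fst g)) * E g \<theta>) has_integral
          (\<Sum>g\<in>G. c g * complex_of_real (R (fst g)) * (if snd g = 0 then complex_of_real (2 * pi) else 0)))
        {0..2 * pi}"
    unfolding E_def using assms by (intro has_integral_sum has_integral_mult_right has_integral_exp_int_2pi)
  show ?thesis
    unfolding diskavg_def inner integral_unique[OF outer]
    by (simp add: R_def sum_distrib_left if_distrib mult_ac cong: if_cong)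
qed

lemma Gam_zero_frequency_cases:
  assumes "(a, 0) \<in> Gam m1 m2"
  obtains k where "k \<in> {0..m1 div 2}" and "a = 4 * int k"
    | j where "odd j" and "a = 2 * j"
proof -
  from assms have "0 \<le> a" "a \<le> 2 * int m1" "even a"
    by (auto simp: Gam_def)
  then obtain j where j: "a = 2 * j" "0 \<le> j" "j \<le> int m1"
    by auto
  show thesis
  proof (cases "even j")
    case True
    then obtain k where "j = 2 * k"
      by blast
    with j have "nat k \<in> {0..m1 div 2}" "a = 4 * int (nat k)"
      by auto
    thus thesis
      by (rule that(1))
  qed (use j that(2) in auto)
qed

lemma integral_cheb_4k_times_r:
  "integral {0..1} (\<lambda>r. cheb (4 * int k) r * r) = 1 / (2 * (1 - 4 * real k ^ 2))"
  using integral_unique[OF has_integral_cheb_even_times_r[of "2 * int k"]]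
  by (simp add: mult.assoc power2_eq_square)

lemma one_minus_four_square_ne_0: "1 - 4 * real (k :: nat) ^ 2 \<noteq> 0"
proof
  assume "1 - 4 * real k ^ 2 = 0"
  hence "real (4 * k ^ 2) = real 1"
    by simp
  hence "4 * k ^ 2 = 1"
    by (simp only: of_nat_eq_iff)
  thus False
    by presburger
qed

lemma diskavg_Pc:
  assumes "m1 \<ge> 1" and "m2 \<ge> 1"
  shows "diskavg (Pc m1 m2 c) = (\<Sum>k=0..m1 div 2. c (4 * int k, 0) / complex_of_real (1 - 4 * real k ^ 2))"
proof -
  define D where "D g = (if snd g = 0 then 2 * c g * complex_of_real (integral {0..1} (\<lambda>r. cheb (fst g) r * r))
    else 0)" for g
  have "diskavg (Pc m1 m2 c) = (\<Sum>g\<in>Gam m1 m2. D g)"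
    unfolding D_def Pc_def[abs_def] by (rule diskavg_sum_Xf[OF finite_Gam])
  also have "\<dots> = (\<Sum>g\<in>(\<lambda>k. (4 * int k, 0)) ` {0..m1 div 2}. D g)"
  proof (rule sum.mono_neutral_right[OF finite_Gam]; safe)
    fix k :: nat assume "k \<in> {0..m1 div 2}"
    thus "(4 * int k, 0) \<in> Gam m1 m2"
      using assms by (auto simp: Gam_def)
  next
    fix a e assume "(a, e) \<in> Gam m1 m2" "(a, e) \<notin> (\<lambda>k. (4 * int k, 0)) ` {0..m1 div 2}"
    thus "D (a, e) = 0"
      using integral_unique[OF has_integral_cheb_even_times_r]
      by (cases "e = 0") (auto simp: D_def elim: Gam_zero_frequency_cases)
  qed
  also have "\<dots> = (\<Sum>k=0..m1 div 2. D (4 * int k, 0))"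
    by (simp add: sum.reindex inj_on_def)
  also have "\<dots> = (\<Sum>k=0..m1 div 2. c (4 * int k, 0) / complex_of_real (1 - 4 * real k ^ 2))"
  proof (rule sum.cong[OF refl])
    fix k :: nat
    have "complex_of_real (1 - 4 * real k ^ 2) \<noteq> 0"
      using one_minus_four_square_ne_0 unfolding of_real_eq_0_iff .
    thus "D (4 * int k, 0) = c (4 * int k, 0) / complex_of_real (1 - 4 * real k ^ 2)"
      unfolding D_def by (simp add: integral_cheb_4k_times_r) (simp add: field_simps)
  qed
  finally show ?thesis .
qed

lemma grid_values_diskavg_Pc:
  assumes "m1 \<ge> 1" and "m2 \<ge> 1"
  shows "(\<Sum>k=0..m1 div 2.
           (ipw m1 m2 (\<lambda>i. Pc m1 m2 c (rnode m1 (fst i)) (thnode m2 (snd i))) (chi m1 m2 (4 * int k, 0))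
            / ipw m1 m2 (chi m1 m2 (4 * int k, 0)) (chi m1 m2 (4 * int k, 0)))
           / complex_of_real (1 - 4 * real k ^ 2))
       = diskavg (Pc m1 m2 c)"
proof -
  have "interp m1 m2 c (\<lambda>i. Pc m1 m2 c (rnode m1 (fst i)) (thnode m2 (snd i)))"
    by (simp add: interp_def)
  hence "ipw m1 m2 (\<lambda>i. Pc m1 m2 c (rnode m1 (fst i)) (thnode m2 (snd i))) (chi m1 m2 (4 * int k, 0))
      / ipw m1 m2 (chi m1 m2 (4 * int k, 0)) (chi m1 m2 (4 * int k, 0)) = c (4 * int k, 0)"
    if "k \<in> {0..m1 div 2}" for k
    using interp_coeff[OF assms] that assms by (auto simp: Gam_def)
  thus ?thesis
    by (simp add: diskavg_Pc[OF assms])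
qed

theorem mainTheorem14:
  fixes m1 m2 :: nat and f :: "int \<times> int \<Rightarrow> complex"
  assumes "m1 \<ge> 1" and "m2 \<ge> 1"
  shows "(\<exists>c. interp m1 m2 c f)
    \<and> (\<forall>c. interp m1 m2 c f \<longrightarrow>
          (\<forall>g\<in>Gam m1 m2. c g = ipw m1 m2 f (chi m1 m2 g) / ipw m1 m2 (chi m1 m2 g) (chi m1 m2 g))
          \<and> diskavg (Pc m1 m2 c) =
              (\<Sum>k=0..m1 div 2. c (4 * int k, 0) / complex_of_real (1 - 4 * real k ^ 2)))
    \<and> (\<forall>c. let fP = (\<lambda>i. Pc m1 m2 c (rnode m1 (fst i)) (thnode m2 (snd i))) in
          (\<Sum>k=0..m1 div 2. (ipw m1 m2 fP (chi m1 m2 (4 * int k, 0))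
                              / ipw m1 m2 (chi m1 m2 (4 * int k, 0)) (chi m1 m2 (4 * int k, 0)))
                             / complex_of_real (1 - 4 * real k ^ 2))
          = diskavg (Pc m1 m2 c))"
  using interp_exists[OF assms] interp_coeff[OF assms] diskavg_Pc[OF assms]
    grid_values_diskavg_Pc[OF assms]
  unfolding Let_def by blast

end
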